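(* Let $G$ be a 1-player timed region graph in which every region of $\mathcal R_{\mathrm{Min}}$ is choiceless. Let $\chi\in\Delta_{\mathrm{Max}}$ be regionally constant (so $G\upharpoonright\chi$ is 0-player) and let $(T^\chi,D^\chi)\models\mathrm{Opt}(G\upharpoonright\chi)$. If $\mathrm{Improve}_{\mathrm{Max}}(\chi,(T^\chi,D^\chi))=\chi$, then $(T^\chi,D^\chi)\models\mathrm{Opt}_{\mathrm{Max}}(G)$.
   Context: Fix $k\in\mathbb N$. Let $C$ be a finite set of clocks. A clock valuation is a function $\nu:C\to[0,k]$; $V$ is the set of clock valuations. For $t\ge 0$ let $(\nu+t)(c)=\nu(c)+t$; for $C'\subseteq C$ let $\mathrm{Reset}(\nu,C')(c)=0$ if $c\in C'$ and $=\nu(c)$ otherwise. Simple clock constraints are $c\bowtie i$ or $c-c'\bowtie i$ with $c,c'\in C$, $i\in\{0,\dots,k\}$, ${\bowtie}\in\{<,>,=,\le,\ge\}$. A clock region is an equivalence class of $V$ under "satisfies the same simple clock constraints"; a clock zone is a convex union of clock regions. For a finite set $L$ of locations, a configuration is $s=(\ell,\nu)\in Q=L\times V$; write $s(c)=\nu(c)$ and $s+t=(\ell,\nu+t)$ (defined if $\nu+t\in V$). A region is $(\ell,P)$ (identified with $\{(\ell,\nu):\nu\in P\}$) for a clock region $P$; $[s]$ is the region containing $s$, $\mathcal R$ the set of regions, $\overline R$ the topological closure of $R$. A zone is a set $\{(\ell,\nu):\nu\in W_\ell\}$ with each $W_\ell$ a clock zone. A timed automaton $\mathcal T=(L,C,S,A,E,\delta,\rho,F)$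 consists of finite $L$, finite $C$, a zone $S\subseteq Q$ of states, a finite set $A$ of actions, $E:A\to 2^S$ with every $E(a)$ a zone, $\delta:L\times A\to L$, $\rho:A\to 2^C$, and a zone $F\subseteq S$ of final states. For $s=(\ell,\nu)$: $s\to_t s'$ if $s'=s+t$ is defined and $s+t'\in S$ for all $t'\in[0,t]$; $s\xrightarrow{a}s'$ if $s'=(\delta(\ell,a),\mathrm{Reset}(\nu,\rho(a)))$, $s,s'\in S$ and $s\in E(a)$. For $(a,t)\in A\times\mathbb R_{\ge0}$, $\mathrm{Succ}(s,(a,t))=(\delta(\ell,a),\mathrm{Reset}(\nu+t,\rho(a)))$. A reachability-time game is $\Gamma=(\mathcal T,L_{\mathrm{Min}},L_{\mathrm{Max}})$ with $(L_{\mathrm{Min}},L_{\mathrm{Max}})$ a partition of $L$; $S_{\mathrm{Min}}$, $S_{\mathrm{Max}}$, $\mathcal R_{\mathrm{Min}}$, $\mathcal R_{\mathrm{Max}}$ are the states/regions with location in $L_{\mathrm{Min}}$ resp. $L_{\mathrm{Max}}$. Region relations: $R\to_*R'$ if there are $s\in R,s'\in R'$, $t\ge 0$ with $s\to_t s'$; $R\to_{+1}R'$ ($R'$ is the time successor of $R$) if $R\to_*R'$, $R\ne R'$, and $R\to_*R''\to_*R'$ implies $R''\in\{R,R'\}$; $R\xrightarrow aR'$ if there are $s\in R,s'\in R'$ with $s\xrightarrow a s'$. $R$ is thin if for all $s\in R$ and $\varepsilon>0$, $[s+\varepsilon]\neq[s]$. For thin $R''$, $b\in\{0,\dots,k\}$,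 $c\in C$: $R\to_{b,c}R''$ if $R\to_*R''$ and $s+(b-s(c))\in R''$ for all $s\in R$. Simple timed actions: $\mathcal A=A\times\{0,\dots,k\}\times C$; for $\alpha=(a,b,c)$, $t(s,\alpha)=b-s(c)$ if $s(c)\le b$ and $0$ otherwise, and $\mathrm{Succ}(s,\alpha)=\mathrm{Succ}(s,(a,t(s,\alpha)))$. For $F$ defined on $\overline{R'}$: $F^\oplus_\alpha(s)=t(s,\alpha)+F(\mathrm{Succ}(s,\alpha))$ and $F^\boxplus_\alpha(s)=1+F(\mathrm{Succ}(s,\alpha))$. Timed region graph $\widehat\Gamma=(\mathcal R,\mathcal M)$: $(R,\alpha,R')\in\mathcal M$ with $\alpha=(a,b,c)$ iff (i) $R\to_{b,c}R''\xrightarrow aR'$ for some $R''$; or (ii) $R\in\mathcal R_{\mathrm{Min}}$ and $R\to_{b,c}R''\to_{+1}R'''\xrightarrow aR'$ for some $R'',R'''$; or (iii) $R\in\mathcal R_{\mathrm{Max}}$ and $R\to_{b,c}R''$, $R'''\to_{+1}R''$, $R'''\xrightarrow aR'$ for some $R'',R'''$. (For $(R,\alpha,R')\in\mathcal M$ and $s\in R$, $\mathrm{Succ}(s,\alpha)\in\overline{R'}$.) Regional functions: maps $T$ assigning to each region $R$ a function $T(R):\overline R\to\mathbb R\cup\{\infty\}$ (resp. $D(R):\overline R\to\mathbb N\cup\{\infty\}$); $\widetilde T(s)=T([s])(s)$. $T$ is regionally simple (regionally constant) if each $T(R)$ is simple (constant), where $F:X\to\mathbb R$ is simple if $F\equiv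 e$ for some $e\in\mathbb Z$ or $F(s)=e-s(c)$ for some $e\in\mathbb Z$, $c\in C$. Lexicographic order: $(x,y)\le^{\mathrm{lex}}(x',y')$ iff $x<x'$, or $x=x'$ and $y\le y'$. Strategies and subgraphs: for a graph $G=(\mathcal R,\mathcal M')$, $\mathcal M'\subseteq\mathcal M$, a positional strategy for Max is a map $\chi:S_{\mathrm{Max}}\to\mathcal M'$ with $\chi(s)$ of the form $([s],\alpha,R)$; similarly $\mu:S_{\mathrm{Min}}\to\mathcal M'$ for Min; $\Delta_{\mathrm{Max}},\Delta_{\mathrm{Min}}$ are these sets. A strategy is regionally constant if $[s]=[s']$ implies equal values (write $\chi(R)$). For regionally constant $\chi$, the strategy subgraph $G\upharpoonright\chi$ keeps all moves of $G$ out of $\mathcal R_{\mathrm{Min}}$ and, out of each $R\in\mathcal R_{\mathrm{Max}}$, only $\chi(R)$; $G\upharpoonright\mu$ is analogous. A region is choiceless in $G$ if it has a unique outgoing move; $G$ is 0-player if all regions are choiceless, 1-player if all Min regions or all Max regions are choiceless. For $s\in S$ let $M^*(s,(T,D))$ (resp. $M_*(s,(T,D))$) be the set of moves $m=([s],\alpha,R')$ of $G$ at which $(T(R')^\oplus_\alpha(s),D(R')^\boxplus_\alpha(s))$ is lexicographically maximal (resp. minimal). Fix a function $\mathrm{Choose}$ selecting an element of each nonempty set of moves. $\mathrm{Improve}_{\mathrm{Max}}(\chi,(T,D))(s)=\chi(s)$ if $\chi(s)\in M^*(s,(T,D))$, and $=\mathrm{Choose}(M^*(s,(T,D)))$ otherwise.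 Optimality equations for a graph $G$: $(T,D)\models\mathrm{Opt}_{\mathrm{Max}}(G)$ (resp. $\mathrm{Opt}_{\mathrm{Min}}(G)$) iff $(\widetilde T(s),\widetilde D(s))=(0,0)$ for $s\in F$ and, for all $s\in S\setminus F$, $(\widetilde T(s),\widetilde D(s))=\max^{\mathrm{lex}}$ (resp. $\min^{\mathrm{lex}}$) of $\{(T(R')^\oplus_\alpha(s),D(R')^\boxplus_\alpha(s)):([s],\alpha,R')\text{ a move of }G\}$. If $G$ is 0-player these coincide and are written $\mathrm{Opt}(G)$. *)

theory Defs
  imports "HOL-Library.Extended_Real" "HOL-Library.Extended_Nat"
begin

text \<open>Clocks are the elements of a finite type 'c (so C = UNIV), locations the
elements of a finite type 'l (so L = UNIV), actions the elements of a finite type 'a.\<close>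

type_synonym ('l,'c) conf = "'l \<times> ('c \<Rightarrow> real)"

definition valuations :: "nat \<Rightarrow> ('c \<Rightarrow> real) set" where
  "valuations k = {\<nu>. \<forall>c. 0 \<le> \<nu> c \<and> \<nu> c \<le> real k}"

datatype cmp = Lt | Gt | Eq | Le | Ge

fun cmp_sem :: "cmp \<Rightarrow> real \<Rightarrow> real \<Rightarrow> bool" where
  "cmp_sem Lt x y = (x < y)"
| "cmp_sem Gt x y = (x > y)"
| "cmp_sem Eq x y = (x = y)"
| "cmp_sem Le x y = (x \<le> y)"
| "cmp_sem Ge x y = (x \<ge> y)"

datatype 'c ccon = Single 'c cmp nat | Diff 'c 'c cmp nat

fun ccon_bound :: "'c ccon \<Rightarrow> nat" where
  "ccon_bound (Single c r i) = i"
| "ccon_bound (Diff c c' r i) = i"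

fun ccon_sat :: "('c \<Rightarrow> real) \<Rightarrow> 'c ccon \<Rightarrow> bool" where
  "ccon_sat \<nu> (Single c r i) = cmp_sem r (\<nu> c) (real i)"
| "ccon_sat \<nu> (Diff c c' r i) = cmp_sem r (\<nu> c - \<nu> c') (real i)"

definition clock_equiv :: "nat \<Rightarrow> ('c \<Rightarrow> real) \<Rightarrow> ('c \<Rightarrow> real) \<Rightarrow> bool" where
  "clock_equiv k \<nu> \<nu>' \<longleftrightarrow> (\<forall>\<phi>. ccon_bound \<phi> \<le> k \<longrightarrow> (ccon_sat \<nu> \<phi> \<longleftrightarrow> ccon_sat \<nu>' \<phi>))"

definition clock_regions :: "nat \<Rightarrow> ('c \<Rightarrow> real) set set" where
  "clock_regions k = valuations k // {(\<nu>,\<nu>'). \<nu> \<in> valuations k \<and> \<nu>' \<in> valuations k \<and> clock_equiv k \<nu> \<nu>'}"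

definition convex_val_set :: "('c \<Rightarrow> real) set \<Rightarrow> bool" where
  "convex_val_set W \<longleftrightarrow> (\<forall>x\<in>W. \<forall>y\<in>W. \<forall>u::real. 0 \<le> u \<and> u \<le> 1 \<longrightarrow> (\<lambda>c. (1 - u) * x c + u * y c) \<in> W)"

definition clock_zone :: "nat \<Rightarrow> ('c \<Rightarrow> real) set \<Rightarrow> bool" where
  "clock_zone k W \<longleftrightarrow> (\<exists>\<P>. \<P> \<subseteq> clock_regions k \<and> W = \<Union>\<P>) \<and> convex_val_set W"

definition is_zone :: "nat \<Rightarrow> ('l,'c) conf set \<Rightarrow> bool" where
  "is_zone k Z \<longleftrightarrow> (\<forall>l. clock_zone k {\<nu>. (l,\<nu>) \<in> Z})"

definition is_region :: "nat \<Rightarrow> ('l,'c) conf set \<Rightarrow> bool" where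
  "is_region k R \<longleftrightarrow> (\<exists>l P. P \<in> clock_regions k \<and> R = {l} \<times> P)"

definition reg_of :: "nat \<Rightarrow> ('l,'c) conf \<Rightarrow> ('l,'c) conf set" where
  "reg_of k s = {(fst s, \<nu>') | \<nu>'. \<nu>' \<in> valuations k \<and> clock_equiv k (snd s) \<nu>'}"

definition delay :: "('l,'c) conf \<Rightarrow> real \<Rightarrow> ('l,'c) conf" where
  "delay s t = (fst s, \<lambda>c. snd s c + t)"

definition reset :: "('c \<Rightarrow> real) \<Rightarrow> 'c set \<Rightarrow> ('c \<Rightarrow> real)" where
  "reset \<nu> X = (\<lambda>c. if c \<in> X then 0 else \<nu> c)"

record ('l,'c,'a) ta =
  St :: "('l,'c) conf set"
  Enab :: "'a \<Rightarrow> ('l,'c) conf set"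
  delta :: "'l \<Rightarrow> 'a \<Rightarrow> 'l"
  rho :: "'a \<Rightarrow> 'c set"
  Fin :: "('l,'c) conf set"

definition timed_automaton :: "nat \<Rightarrow> ('l,'c,'a) ta \<Rightarrow> bool" where
  "timed_automaton k \<T> \<longleftrightarrow>
     St \<T> \<subseteq> UNIV \<times> valuations k \<and> is_zone k (St \<T>) \<and>
     (\<forall>a. is_zone k (Enab \<T> a) \<and> Enab \<T> a \<subseteq> St \<T>) \<and>
     is_zone k (Fin \<T>) \<and> Fin \<T> \<subseteq> St \<T>"

definition delay_step :: "nat \<Rightarrow> ('l,'c,'a) ta \<Rightarrow> ('l,'c) conf \<Rightarrow> real \<Rightarrow> ('l,'c) conf \<Rightarrow> bool" where
  "delay_step k \<T> s t s' \<longleftrightarrow> 0 \<le> t \<and> snd (delay s t) \<in> valuations k \<and> s' = delay s t \<and>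
     (\<forall>t'. 0 \<le> t' \<and> t' \<le> t \<longrightarrow> delay s t' \<in> St \<T>)"

definition act_step :: "('l,'c,'a) ta \<Rightarrow> 'a \<Rightarrow> ('l,'c) conf \<Rightarrow> ('l,'c) conf \<Rightarrow> bool" where
  "act_step \<T> a s s' \<longleftrightarrow> s' = (delta \<T> (fst s) a, reset (snd s) (rho \<T> a)) \<and>
     s \<in> St \<T> \<and> s' \<in> St \<T> \<and> s \<in> Enab \<T> a"

definition Succ :: "('l,'c,'a) ta \<Rightarrow> ('l,'c) conf \<Rightarrow> 'a \<times> real \<Rightarrow> ('l,'c) conf" where
  "Succ \<T> s xt = (delta \<T> (fst s) (fst xt), reset (\<lambda>c. snd s c + snd xt) (rho \<T> (fst xt)))"

definition regions :: "nat \<Rightarrow> ('l,'c,'a) ta \<Rightarrow> ('l,'c) conf set set" where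
  "regions k \<T> = {R. is_region k R \<and> R \<subseteq> St \<T>}"

definition reg_delay :: "nat \<Rightarrow> ('l,'c,'a) ta \<Rightarrow> ('l,'c) conf set \<Rightarrow> ('l,'c) conf set \<Rightarrow> bool" where
  "reg_delay k \<T> R R' \<longleftrightarrow> (\<exists>s\<in>R. \<exists>s'\<in>R'. \<exists>t. delay_step k \<T> s t s')"

definition reg_succ :: "nat \<Rightarrow> ('l,'c,'a) ta \<Rightarrow> ('l,'c) conf set \<Rightarrow> ('l,'c) conf set \<Rightarrow> bool" where
  "reg_succ k \<T> R R' \<longleftrightarrow> reg_delay k \<T> R R' \<and> R \<noteq> R' \<and>
     (\<forall>R''. is_region k R'' \<and> reg_delay k \<T> R R'' \<and> reg_delay k \<T> R'' R' \<longrightarrow> R'' = R \<or> R'' = R')"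

definition reg_act :: "('l,'c,'a) ta \<Rightarrow> 'a \<Rightarrow> ('l,'c) conf set \<Rightarrow> ('l,'c) conf set \<Rightarrow> bool" where
  "reg_act \<T> a R R' \<longleftrightarrow> (\<exists>s\<in>R. \<exists>s'\<in>R'. act_step \<T> a s s')"

definition thin :: "nat \<Rightarrow> ('l,'c) conf set \<Rightarrow> bool" where
  "thin k R \<longleftrightarrow> (\<forall>s\<in>R. \<forall>\<epsilon>>0. snd (delay s \<epsilon>) \<in> valuations k \<longrightarrow> reg_of k (delay s \<epsilon>) \<noteq> reg_of k s)"

definition reg_bc :: "nat \<Rightarrow> ('l,'c,'a) ta \<Rightarrow> nat \<Rightarrow> 'c \<Rightarrow> ('l,'c) conf set \<Rightarrow> ('l,'c) conf set \<Rightarrow> bool" where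
  "reg_bc k \<T> b c R R'' \<longleftrightarrow> thin k R'' \<and> reg_delay k \<T> R R'' \<and>
     (\<forall>s\<in>R. delay s (real b - snd s c) \<in> R'')"

type_synonym ('a,'c) sta = "'a \<times> nat \<times> 'c"
type_synonym ('l,'c,'a) move = "('l,'c) conf set \<times> ('a,'c) sta \<times> ('l,'c) conf set"

definition sta_time :: "('l,'c) conf \<Rightarrow> ('a,'c) sta \<Rightarrow> real" where
  "sta_time s \<alpha> = (case \<alpha> of (a,b,c) \<Rightarrow> if snd s c \<le> real b then real b - snd s c else 0)"

definition Succ_sta :: "('l,'c,'a) ta \<Rightarrow> ('l,'c) conf \<Rightarrow> ('a,'c) sta \<Rightarrow> ('l,'c) conf" where
  "Succ_sta \<T> s \<alpha> = Succ \<T> s (fst \<alpha>, sta_time s \<alpha>)"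

definition Rmin :: "nat \<Rightarrow> ('l,'c,'a) ta \<Rightarrow> 'l set \<Rightarrow> ('l,'c) conf set set" where
  "Rmin k \<T> Lmin = {R \<in> regions k \<T>. \<forall>s\<in>R. fst s \<in> Lmin}"

definition Rmax :: "nat \<Rightarrow> ('l,'c,'a) ta \<Rightarrow> 'l set \<Rightarrow> ('l,'c) conf set set" where
  "Rmax k \<T> Lmin = {R \<in> regions k \<T>. \<forall>s\<in>R. fst s \<notin> Lmin}"

definition Smax :: "('l,'c,'a) ta \<Rightarrow> 'l set \<Rightarrow> ('l,'c) conf set" where
  "Smax \<T> Lmin = {s \<in> St \<T>. fst s \<notin> Lmin}"

definition region_moves :: "nat \<Rightarrow> ('l,'c,'a) ta \<Rightarrow> 'l set \<Rightarrow> ('l,'c,'a) move set" where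
  "region_moves k \<T> Lmin = {(R,(a,b,c),R') | R a b c R'.
     R \<in> regions k \<T> \<and> R' \<in> regions k \<T> \<and> b \<le> k \<and>
     ((\<exists>R''\<in>regions k \<T>. reg_bc k \<T> b c R R'' \<and> reg_act \<T> a R'' R') \<or>
      (R \<in> Rmin k \<T> Lmin \<and> (\<exists>R''\<in>regions k \<T>. \<exists>R'''\<in>regions k \<T>.
          reg_bc k \<T> b c R R'' \<and> reg_succ k \<T> R'' R''' \<and> reg_act \<T> a R''' R')) \<or>
      (R \<in> Rmax k \<T> Lmin \<and> (\<exists>R''\<in>regions k \<T>. \<exists>R'''\<in>regions k \<T>.
          reg_bc k \<T> b c R R'' \<and> reg_succ k \<T> R''' R'' \<and> reg_act \<T> a R''' R')))}"

text \<open>A graph G = (\<R>, M') is represented by its set of moves M', required to be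
  a subset of the moves of the timed region graph.\<close>
definition choiceless :: "('l,'c,'a) move set \<Rightarrow> ('l,'c) conf set \<Rightarrow> bool" where
  "choiceless G R \<longleftrightarrow> (\<exists>!m. m \<in> G \<and> fst m = R)"

definition max_strategy :: "nat \<Rightarrow> ('l,'c,'a) ta \<Rightarrow> 'l set \<Rightarrow> ('l,'c,'a) move set
    \<Rightarrow> (('l,'c) conf \<Rightarrow> ('l,'c,'a) move) \<Rightarrow> bool" where
  "max_strategy k \<T> Lmin G \<chi> \<longleftrightarrow> (\<forall>s\<in>Smax \<T> Lmin. \<chi> s \<in> G \<and> fst (\<chi> s) = reg_of k s)"

definition max_reg_const :: "nat \<Rightarrow> ('l,'c,'a) ta \<Rightarrow> 'l set \<Rightarrow> (('l,'c) conf \<Rightarrow> ('l,'c,'a) move) \<Rightarrow> bool" where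
  "max_reg_const k \<T> Lmin \<chi> \<longleftrightarrow>
     (\<forall>s\<in>Smax \<T> Lmin. \<forall>s'\<in>Smax \<T> Lmin. reg_of k s = reg_of k s' \<longrightarrow> \<chi> s = \<chi> s')"

definition restrict_max :: "nat \<Rightarrow> ('l,'c,'a) ta \<Rightarrow> 'l set \<Rightarrow> ('l,'c,'a) move set
    \<Rightarrow> (('l,'c) conf \<Rightarrow> ('l,'c,'a) move) \<Rightarrow> ('l,'c,'a) move set" where
  "restrict_max k \<T> Lmin G \<chi> = {m \<in> G. fst m \<in> Rmin k \<T> Lmin \<or>
      (fst m \<in> Rmax k \<T> Lmin \<and> (\<exists>s\<in>Smax \<T> Lmin. s \<in> fst m \<and> m = \<chi> s))}"

definition lex_le :: "('x::linorder \<times> 'y::linorder) \<Rightarrow> ('x \<times> 'y) \<Rightarrow> bool" where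
  "lex_le p q \<longleftrightarrow> fst p < fst q \<or> (fst p = fst q \<and> snd p \<le> snd q)"

definition oplus :: "('l,'c,'a) ta \<Rightarrow> (('l,'c) conf \<Rightarrow> ereal) \<Rightarrow> ('a,'c) sta \<Rightarrow> ('l,'c) conf \<Rightarrow> ereal" where
  "oplus \<T> F \<alpha> s = ereal (sta_time s \<alpha>) + F (Succ_sta \<T> s \<alpha>)"

definition boxplus :: "('l,'c,'a) ta \<Rightarrow> (('l,'c) conf \<Rightarrow> enat) \<Rightarrow> ('a,'c) sta \<Rightarrow> ('l,'c) conf \<Rightarrow> enat" where
  "boxplus \<T> F \<alpha> s = 1 + F (Succ_sta \<T> s \<alpha>)"

definition move_val :: "('l,'c,'a) ta \<Rightarrow> (('l,'c) conf set \<Rightarrow> ('l,'c) conf \<Rightarrow> ereal)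
    \<Rightarrow> (('l,'c) conf set \<Rightarrow> ('l,'c) conf \<Rightarrow> enat) \<Rightarrow> ('l,'c) conf \<Rightarrow> ('l,'c,'a) move \<Rightarrow> ereal \<times> enat" where
  "move_val \<T> T D s m = (case m of (R, \<alpha>, R') \<Rightarrow> (oplus \<T> (T R') \<alpha> s, boxplus \<T> (D R') \<alpha> s))"

definition Mstar :: "nat \<Rightarrow> ('l,'c,'a) ta \<Rightarrow> ('l,'c,'a) move set \<Rightarrow> (('l,'c) conf set \<Rightarrow> ('l,'c) conf \<Rightarrow> ereal)
    \<Rightarrow> (('l,'c) conf set \<Rightarrow> ('l,'c) conf \<Rightarrow> enat) \<Rightarrow> ('l,'c) conf \<Rightarrow> ('l,'c,'a) move set" where
  "Mstar k \<T> G T D s = {m \<in> G. fst m = reg_of k s \<and>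
     (\<forall>m'\<in>G. fst m' = reg_of k s \<longrightarrow> lex_le (move_val \<T> T D s m') (move_val \<T> T D s m))}"

definition Improve_max :: "(('l,'c,'a) move set \<Rightarrow> ('l,'c,'a) move) \<Rightarrow> nat \<Rightarrow> ('l,'c,'a) ta
    \<Rightarrow> ('l,'c,'a) move set \<Rightarrow> (('l,'c) conf \<Rightarrow> ('l,'c,'a) move)
    \<Rightarrow> (('l,'c) conf set \<Rightarrow> ('l,'c) conf \<Rightarrow> ereal) \<Rightarrow> (('l,'c) conf set \<Rightarrow> ('l,'c) conf \<Rightarrow> enat)
    \<Rightarrow> ('l,'c) conf \<Rightarrow> ('l,'c,'a) move" where
  "Improve_max Choose k \<T> G \<chi> T D s =
     (if \<chi> s \<in> Mstar k \<T> G T D s then \<chi> s else Choose (Mstar k \<T> G T D s))"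

definition is_lex_max :: "('x::linorder \<times> 'y::linorder) \<Rightarrow> ('x \<times> 'y) set \<Rightarrow> bool" where
  "is_lex_max x X \<longleftrightarrow> x \<in> X \<and> (\<forall>y\<in>X. lex_le y x)"

definition is_lex_min :: "('x::linorder \<times> 'y::linorder) \<Rightarrow> ('x \<times> 'y) set \<Rightarrow> bool" where
  "is_lex_min x X \<longleftrightarrow> x \<in> X \<and> (\<forall>y\<in>X. lex_le x y)"

definition move_vals :: "nat \<Rightarrow> ('l,'c,'a) ta \<Rightarrow> ('l,'c,'a) move set \<Rightarrow> (('l,'c) conf set \<Rightarrow> ('l,'c) conf \<Rightarrow> ereal)
    \<Rightarrow> (('l,'c) conf set \<Rightarrow> ('l,'c) conf \<Rightarrow> enat) \<Rightarrow> ('l,'c) conf \<Rightarrow> (ereal \<times> enat) set" where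
  "move_vals k \<T> G T D s = {move_val \<T> T D s m | m. m \<in> G \<and> fst m = reg_of k s}"

definition opt_max :: "nat \<Rightarrow> ('l,'c,'a) ta \<Rightarrow> ('l,'c,'a) move set \<Rightarrow> (('l,'c) conf set \<Rightarrow> ('l,'c) conf \<Rightarrow> ereal)
    \<Rightarrow> (('l,'c) conf set \<Rightarrow> ('l,'c) conf \<Rightarrow> enat) \<Rightarrow> bool" where
  "opt_max k \<T> G T D \<longleftrightarrow>
     (\<forall>s\<in>Fin \<T>. T (reg_of k s) s = 0 \<and> D (reg_of k s) s = 0) \<and>
     (\<forall>s\<in>St \<T> - Fin \<T>. is_lex_max (T (reg_of k s) s, D (reg_of k s) s) (move_vals k \<T> G T D s))"

definition opt_min :: "nat \<Rightarrow> ('l,'c,'a) ta \<Rightarrow> ('l,'c,'a) move set \<Rightarrow> (('l,'c) conf set \<Rightarrow> ('l,'c) conf \<Rightarrow> ereal)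
    \<Rightarrow> (('l,'c) conf set \<Rightarrow> ('l,'c) conf \<Rightarrow> enat) \<Rightarrow> bool" where
  "opt_min k \<T> G T D \<longleftrightarrow>
     (\<forall>s\<in>Fin \<T>. T (reg_of k s) s = 0 \<and> D (reg_of k s) s = 0) \<and>
     (\<forall>s\<in>St \<T> - Fin \<T>. is_lex_min (T (reg_of k s) s, D (reg_of k s) s) (move_vals k \<T> G T D s))"

text \<open>For a 0-player graph both equations coincide; Opt(G) is their conjunction.\<close>
definition opt0 :: "nat \<Rightarrow> ('l,'c,'a) ta \<Rightarrow> ('l,'c,'a) move set \<Rightarrow> (('l,'c) conf set \<Rightarrow> ('l,'c) conf \<Rightarrow> ereal)
    \<Rightarrow> (('l,'c) conf set \<Rightarrow> ('l,'c) conf \<Rightarrow> enat) \<Rightarrow> bool" where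
  "opt0 k \<T> G T D \<longleftrightarrow> opt_max k \<T> G T D \<and> opt_min k \<T> G T D"

end

theory Submission
  imports Defs
begin

(* Let s be a non-final state and let m be the move of G restricted to chi
   that realises the optimality equation of that 0-player graph at s, so that
   (T[s](s), D[s](s)) is the value of m at s.  Since every move of the restriction
   is a move of G, it suffices to show that m is a lexicographically maximal move of
   G at s, i.e. m lies in Mstar(s):
   - if s belongs to Min, its region is choiceless in G, so m is the only move of G
     out of [s] and is trivially maximal;
   - if s belongs to Max, m = chi(s) because chi is regionally constant; as G has
     finitely many moves out of [s], Mstar(s) is nonempty, and then the fixpoint
     hypothesis Improve_max(chi) = chi forces chi(s) into Mstar(s). *)

text \<open>Over finitely many clocks only finitely many simple constraints have bounds up
  to k; a clock region is determined by the set of those constraints it satisfies.\<close>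

lemma finite_bounded_constraints: "finite {\<phi> :: ('c::finite) ccon. ccon_bound \<phi> \<le> k}"
proof -
  have cmps: "(UNIV :: cmp set) = {Lt, Gt, Eq, Le, Ge}"
    by (auto intro: cmp.exhaust)
  have "{\<phi> :: 'c ccon. ccon_bound \<phi> \<le> k} \<subseteq>
     (\<lambda>(c,r,i). Single c r i) ` (UNIV \<times> UNIV \<times> {..k}) \<union>
     (\<lambda>(c,c',r,i). Diff c c' r i) ` (UNIV \<times> UNIV \<times> UNIV \<times> {..k})"
  proof
    fix \<phi> :: "'c ccon"
    assume "\<phi> \<in> {\<phi>. ccon_bound \<phi> \<le> k}"
    then show "\<phi> \<in> (\<lambda>(c,r,i). Single c r i) ` (UNIV \<times> UNIV \<times> {..k}) \<union>
        (\<lambda>(c,c',r,i). Diff c c' r i) ` (UNIV \<times> UNIV \<times> UNIV \<times> {..k})"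
      by (cases \<phi>) force+
  qed
  moreover have "finite (UNIV :: cmp set)" by (simp add: cmps)
  ultimately show ?thesis
    by (meson finite_Un finite_SigmaI finite_atMost finite_imageI finite_subset finite_UNIV)
qed

definition constraint_signature :: "nat \<Rightarrow> ('c \<Rightarrow> real) \<Rightarrow> 'c ccon set" where
  "constraint_signature k \<nu> = {\<phi>. ccon_bound \<phi> \<le> k \<and> ccon_sat \<nu> \<phi>}"

lemma clock_equiv_iff_signature:
  "clock_equiv k \<nu> \<nu>' \<longleftrightarrow> constraint_signature k \<nu> = constraint_signature k \<nu>'"
  unfolding clock_equiv_def constraint_signature_def by blast

lemma finite_clock_regions: "finite (clock_regions k :: ('c::finite \<Rightarrow> real) set set)"
proof -
  let ?class = "\<lambda>S. {\<nu>' \<in> valuations k. constraint_signature k \<nu>' = S}"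
  have "clock_regions k \<subseteq> ?class ` Pow {\<phi> :: 'c ccon. ccon_bound \<phi> \<le> k}"
  proof
    fix X :: "('c \<Rightarrow> real) set"
    assume "X \<in> clock_regions k"
    then obtain \<nu> where "\<nu> \<in> valuations k"
      and "X = {(\<nu>,\<nu>'). \<nu> \<in> valuations k \<and> \<nu>' \<in> valuations k \<and> clock_equiv k \<nu> \<nu>'} `` {\<nu>}"
      unfolding clock_regions_def quotient_def by blast
    then have "X = ?class (constraint_signature k \<nu>)"
      by (auto simp: clock_equiv_iff_signature)
    moreover have "constraint_signature k \<nu> \<in> Pow {\<phi>. ccon_bound \<phi> \<le> k}"
      by (auto simp: constraint_signature_def)
    ultimately show "X \<in> ?class ` Pow {\<phi> :: 'c ccon. ccon_bound \<phi> \<le> k}"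
      by blast
  qed
  moreover have "finite (Pow {\<phi> :: 'c ccon. ccon_bound \<phi> \<le> k})"
    using finite_bounded_constraints by simp
  ultimately show ?thesis
    using finite_subset by blast
qed

lemma finite_regions: "finite (regions k (\<T> :: ('l::finite,'c::finite,'a) ta))"
proof -
  have "regions k \<T> \<subseteq> (\<lambda>(l,P). {l} \<times> P) ` (UNIV \<times> clock_regions k)"
    unfolding regions_def is_region_def by force
  then show ?thesis
    using finite_clock_regions by (meson finite_SigmaI finite_UNIV finite_imageI finite_subset)
qed

lemma finite_moves_from:
  fixes G :: "('l::finite,'c::finite,'a::finite) move set"
  assumes "G \<subseteq> region_moves k \<T> Lmin"
  shows "finite {m \<in> G. fst m = R}"
proof (rule finite_subset)
  show "{m \<in> G. fst m = R} \<subseteq> {R} \<times> (UNIV \<times> {..k} \<times> UNIV) \<times> regions k \<T>"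
    using assms unfolding region_moves_def by auto
  show "finite ({R} \<times> ((UNIV :: 'a set) \<times> {..k} \<times> (UNIV :: 'c set)) \<times> regions k \<T>)"
    using finite_regions by (intro finite_SigmaI) auto
qed

lemma state_in_own_region:
  assumes "timed_automaton k \<T>" and "s \<in> St \<T>"
  shows "s \<in> reg_of k s"
proof -
  have "snd s \<in> valuations k"
    using assms unfolding timed_automaton_def by auto
  then show ?thesis
    unfolding reg_of_def clock_equiv_def by (cases s) auto
qed

lemma lex_le_refl: "lex_le x x"
  by (simp add: lex_le_def)

lemma lex_max_exists:
  fixes X :: "('x::linorder \<times> 'y::linorder) set"
  assumes "finite X" and "X \<noteq> {}"
  shows "\<exists>x\<in>X. \<forall>y\<in>X. lex_le y x"
  using assms
proof (induction X rule: finite_ne_induct)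
  case (singleton x)
  then show ?case by (auto simp: lex_le_def)
next
  case (insert a F)
  then obtain x where x: "x \<in> F" "\<forall>y\<in>F. lex_le y x" by blast
  show ?case
  proof (cases "lex_le a x")
    case True
    then show ?thesis using x by auto
  next
    case False
    then have "\<forall>y\<in>F. lex_le y a"
      using x(2) by (auto simp: lex_le_def)
    then show ?thesis by (auto simp: lex_le_def)
  qed
qed

lemma Mstar_is_lex_max:
  assumes "m \<in> Mstar k \<T> G T D s"
  shows "is_lex_max (move_val \<T> T D s m) (move_vals k \<T> G T D s)"
proof -
  have m: "m \<in> G" "fst m = reg_of k s"
    and best: "\<And>m'. m' \<in> G \<Longrightarrow> fst m' = reg_of k s
                 \<Longrightarrow> lex_le (move_val \<T> T D s m') (move_val \<T> T D s m)"
    using assms unfolding Mstar_def by auto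
  have "move_val \<T> T D s m \<in> move_vals k \<T> G T D s"
    unfolding move_vals_def using m by blast
  moreover have "\<forall>y\<in>move_vals k \<T> G T D s. lex_le y (move_val \<T> T D s m)"
    unfolding move_vals_def using best by blast
  ultimately show ?thesis
    unfolding is_lex_max_def by blast
qed

lemma Mstar_nonempty:
  assumes "finite {m \<in> G. fst m = reg_of k s}" and "m0 \<in> G" and "fst m0 = reg_of k s"
  shows "Mstar k \<T> G T D s \<noteq> {}"
proof -
  have vals: "move_vals k \<T> G T D s = move_val \<T> T D s ` {m \<in> G. fst m = reg_of k s}"
    unfolding move_vals_def by blast
  have "finite (move_vals k \<T> G T D s)"
    using assms(1) vals by simp
  moreover have "move_vals k \<T> G T D s \<noteq> {}"
    using assms(2,3) vals by blast
  ultimately obtain v where v: "v \<in> move_vals k \<T> G T D s" "\<forall>y\<in>move_vals k \<T> G T D s. lex_le y v"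
    using lex_max_exists by blast
  then obtain m where m: "m \<in> G" "fst m = reg_of k s" "v = move_val \<T> T D s m"
    unfolding move_vals_def by blast
  have "lex_le (move_val \<T> T D s m') (move_val \<T> T D s m)"
    if "m' \<in> G" "fst m' = reg_of k s" for m'
  proof -
    have "move_val \<T> T D s m' \<in> move_vals k \<T> G T D s"
      unfolding move_vals_def using that by blast
    then show ?thesis
      using v(2) m(3) by simp
  qed
  then have "m \<in> Mstar k \<T> G T D s"
    using m(1,2) unfolding Mstar_def by blast
  then show ?thesis by blast
qed

lemma choiceless_Mstar:
  assumes "choiceless G (reg_of k s)" and "m \<in> G" and "fst m = reg_of k s"
  shows "m \<in> Mstar k \<T> G T D s"
proof -
  have unique: "m' = m" if "m' \<in> G" "fst m' = reg_of k s" for m'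
    using assms(1) unfolding choiceless_def
  proof (rule ex1E)
    fix m0 assume "\<forall>y. y \<in> G \<and> fst y = reg_of k s \<longrightarrow> y = m0"
    then show "m' = m"
      using assms(2,3) that by blast
  qed
  then have "\<forall>m'\<in>G. fst m' = reg_of k s \<longrightarrow> lex_le (move_val \<T> T D s m') (move_val \<T> T D s m)"
    using lex_le_refl by blast
  then show ?thesis
    using assms(2,3) unfolding Mstar_def by blast
qed

lemma improve_fixpoint_Mstar:
  assumes "Improve_max Choose k \<T> G \<chi> T D s = \<chi> s"
    and "\<forall>X. X \<noteq> {} \<longrightarrow> Choose X \<in> X"
    and "Mstar k \<T> G T D s \<noteq> {}"
  shows "\<chi> s \<in> Mstar k \<T> G T D s"
proof (rule ccontr)
  assume "\<chi> s \<notin> Mstar k \<T> G T D s"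
  then have "\<chi> s = Choose (Mstar k \<T> G T D s)"
    using assms(1) unfolding Improve_max_def by simp
  then show False
    using assms(2,3) \<open>\<chi> s \<notin> Mstar k \<T> G T D s\<close> by metis
qed

lemma restrict_max_sub: "restrict_max k \<T> Lmin G \<chi> \<subseteq> G"
  unfolding restrict_max_def by blast

lemma restrict_max_from_Min:
  assumes "m \<in> restrict_max k \<T> Lmin G \<chi>" and "s \<in> fst m" and "fst s \<in> Lmin"
  shows "fst m \<in> Rmin k \<T> Lmin"
  using assms unfolding restrict_max_def Rmax_def by auto

text \<open>Out of a Max state's region, the only move of the subgraph is chi(s), because
  chi is a regionally constant strategy.\<close>

lemma restrict_max_from_Max:
  assumes chi_strat: "max_strategy k \<T> Lmin G \<chi>"
    and chi_const: "max_reg_const k \<T> Lmin \<chi>"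
    and m: "m \<in> restrict_max k \<T> Lmin G \<chi>" "fst m = reg_of k s"
    and s: "s \<in> Smax \<T> Lmin" "s \<in> reg_of k s"
  shows "m = \<chi> s"
proof -
  have "fst m \<notin> Rmin k \<T> Lmin"
    using m(2) s unfolding Rmin_def Smax_def by blast
  then obtain s' where s': "s' \<in> Smax \<T> Lmin" "m = \<chi> s'"
    using m(1) unfolding restrict_max_def by blast
  have "fst (\<chi> s') = reg_of k s'"
    using chi_strat s'(1) unfolding max_strategy_def by blast
  then have "reg_of k s' = reg_of k s"
    using s'(2) m(2) by simp
  then show ?thesis
    using chi_const s' s(1) unfolding max_reg_const_def by blast
qed

lemma restrict_max_move_optimal:
  fixes G :: "('l::finite,'c::finite,'a::finite) move set"
  assumes TA: "timed_automaton k \<T>"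
    and G_sub: "G \<subseteq> region_moves k \<T> Lmin"
    and min_choiceless: "\<forall>R\<in>Rmin k \<T> Lmin. choiceless G R"
    and chi_strat: "max_strategy k \<T> Lmin G \<chi>"
    and chi_const: "max_reg_const k \<T> Lmin \<chi>"
    and Choose: "\<forall>X. X \<noteq> {} \<longrightarrow> Choose X \<in> X"
    and improve_fix: "\<forall>s\<in>Smax \<T> Lmin. Improve_max Choose k \<T> G \<chi> T D s = \<chi> s"
    and s: "s \<in> St \<T>"
    and m: "m \<in> restrict_max k \<T> Lmin G \<chi>" "fst m = reg_of k s"
  shows "m \<in> Mstar k \<T> G T D s"
proof -
  have s_in: "s \<in> reg_of k s"
    using state_in_own_region TA s by blast
  have mG: "m \<in> G"
    using m(1) restrict_max_sub by blast
  show ?thesis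
  proof (cases "fst s \<in> Lmin")
    case True
    then have "choiceless G (reg_of k s)"
      using restrict_max_from_Min[OF m(1)] m(2) s_in min_choiceless by auto
    then show ?thesis
      using choiceless_Mstar mG m(2) by blast
  next
    case False
    then have s_Max: "s \<in> Smax \<T> Lmin"
      using s by (simp add: Smax_def)
    have "Mstar k \<T> G T D s \<noteq> {}"
      using Mstar_nonempty finite_moves_from[OF G_sub] mG m(2) by blast
    then show ?thesis
      using improve_fixpoint_Mstar improve_fix Choose s_Max
        restrict_max_from_Max[OF chi_strat chi_const m s_Max s_in] by blast
  qed
qed

theorem mainTheorem11:
  fixes k :: nat
    and \<T> :: "('l::finite, 'c::finite, 'a::finite) ta"
    and Lmin :: "'l set"
    and G :: "('l,'c,'a) move set"
    and \<chi> :: "('l,'c) conf \<Rightarrow> ('l,'c,'a) move"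
    and T :: "('l,'c) conf set \<Rightarrow> ('l,'c) conf \<Rightarrow> ereal"
    and D :: "('l,'c) conf set \<Rightarrow> ('l,'c) conf \<Rightarrow> enat"
    and Choose :: "('l,'c,'a) move set \<Rightarrow> ('l,'c,'a) move"
  assumes TA: "timed_automaton k \<T>"
    and G_sub: "G \<subseteq> region_moves k \<T> Lmin"
    and min_choiceless: "\<forall>R\<in>Rmin k \<T> Lmin. choiceless G R"
    and chi_strat: "max_strategy k \<T> Lmin G \<chi>"
    and chi_const: "max_reg_const k \<T> Lmin \<chi>"
    and T_range: "\<forall>R s. T R s \<noteq> -\<infinity>"
    and opt_chi: "opt0 k \<T> (restrict_max k \<T> Lmin G \<chi>) T D"
    and Choose: "\<forall>X. X \<noteq> {} \<longrightarrow> Choose X \<in> X"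
    and improve_fix: "\<forall>s\<in>Smax \<T> Lmin. Improve_max Choose k \<T> G \<chi> T D s = \<chi> s"
  shows "opt_max k \<T> G T D"
proof -
  have opt_H: "opt_max k \<T> (restrict_max k \<T> Lmin G \<chi>) T D"
    using opt_chi by (simp add: opt0_def)
  have "is_lex_max (T (reg_of k s) s, D (reg_of k s) s) (move_vals k \<T> G T D s)"
    if s: "s \<in> St \<T> - Fin \<T>" for s
  proof -
    obtain m where m: "m \<in> restrict_max k \<T> Lmin G \<chi>" "fst m = reg_of k s"
      and m_value: "(T (reg_of k s) s, D (reg_of k s) s) = move_val \<T> T D s m"
      using opt_H s unfolding opt_max_def is_lex_max_def move_vals_def by blast
    have "m \<in> Mstar k \<T> G T D s"
      using restrict_max_move_optimal[OF TA G_sub min_choiceless chi_strat chi_const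
          Choose improve_fix _ m] s by blast
    then show ?thesis
      using Mstar_is_lex_max m_value by simp
  qed
  then show ?thesis
    using opt_H unfolding opt_max_def by blast
qed

end
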